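(* Let $m\ge 2$. The bulk checks together with the horizontal and vertical boundary checks defined in the context, viewed as indicator vectors in $\mathbb{F}_2^{2^m}$, are linearly independent over $\mathbb{F}_2$ and are exactly $2^m-m-1$ in number. Consequently the code $uRM(m)$ they define has length $2^m$ and dimension $m+1$.
   Context: Let $a=\lceil m/2\rceil$ and $b=\lfloor m/2\rfloor$. Place $2^m$ bits on a grid with $2^b$ rows and $2^a$ columns, positions $(i,j)$, row $1$ on top, column $1$ leftmost. Bulk checks: for every $1\le i<2^b$, $1\le j<2^a$, the set $\{(i,j),(i+1,j),(i,j+1),(i+1,j+1)\}$. Boundary checks: for a line of $L=2^n$ positions labelled $1,\dots,L$, each $s\in\{1,\dots,n-1\}$, $w=2^s$, and each integer $t$ with $-L/(2w)+1\le t\le L/(2w)-1$, let $S(w,t)=\{L/2-w/2+wt,\ L/2-w/2+wt+1,\ L/2+w/2+wt,\ L/2+w/2+wt+1\}$. Horizontal boundary checks are the $S(w,t)$ with $n=a$ on the top row (position $j\mapsto(1,j)$); vertical boundary checks are the $S(w,t)$ with $n=b$ on the leftmost column (position $i\mapsto(i,1)$). $uRM(m)$ is the set of $x\in\mathbb{F}_2^{2^m}$ whose sum over every check is $0$. *)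

theory Defs
  imports Main "HOL-Library.Z2" "HOL-Library.Indicator_Function" "HOL-Library.Function_Algebras"
begin

definition colexp :: "nat \<Rightarrow> nat" where "colexp m = (m + 1) div 2"
definition rowexp :: "nat \<Rightarrow> nat" where "rowexp m = m div 2"

definition grid :: "nat \<Rightarrow> (nat \<times> nat) set" where
  "grid m = {1..2 ^ rowexp m} \<times> {1..2 ^ colexp m}"

definition bulk_checks :: "nat \<Rightarrow> (nat \<times> nat) set set" where
  "bulk_checks m = {{(i, j), (i + 1, j), (i, j + 1), (i + 1, j + 1)} | i j.
      1 \<le> i \<and> i < 2 ^ rowexp m \<and> 1 \<le> j \<and> j < 2 ^ colexp m}"

text \<open>S(w,t) on a line of length L = 2^n with w = 2^s (all values are positive integers in range).\<close>
definition bchk :: "nat \<Rightarrow> nat \<Rightarrow> int \<Rightarrow> nat set" where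
  "bchk n s t = (let L = (2::int) ^ n; w = (2::int) ^ s in
     nat ` {L div 2 - w div 2 + w * t, L div 2 - w div 2 + w * t + 1,
            L div 2 + w div 2 + w * t, L div 2 + w div 2 + w * t + 1})"

definition line_checks :: "nat \<Rightarrow> nat set set" where
  "line_checks n = {bchk n s t | s t. 1 \<le> s \<and> s \<le> n - 1 \<and>
      - ((2::int) ^ n div (2 * 2 ^ s)) + 1 \<le> t \<and> t \<le> (2::int) ^ n div (2 * 2 ^ s) - 1}"

definition horiz_checks :: "nat \<Rightarrow> (nat \<times> nat) set set" where
  "horiz_checks m = (\<lambda>S. (\<lambda>j. (1, j)) ` S) ` line_checks (colexp m)"

definition vert_checks :: "nat \<Rightarrow> (nat \<times> nat) set set" where
  "vert_checks m = (\<lambda>S. (\<lambda>i. (i, 1)) ` S) ` line_checks (rowexp m)"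

definition checks :: "nat \<Rightarrow> (nat \<times> nat) set set" where
  "checks m = bulk_checks m \<union> horiz_checks m \<union> vert_checks m"

text \<open>F_2^{2^m}: bit-valued functions on positions, vanishing off the grid.\<close>
definition f2scale :: "bit \<Rightarrow> ((nat \<times> nat) \<Rightarrow> bit) \<Rightarrow> ((nat \<times> nat) \<Rightarrow> bit)" where
  "f2scale c x = (\<lambda>p. c * x p)"

definition ambient :: "nat \<Rightarrow> ((nat \<times> nat) \<Rightarrow> bit) set" where
  "ambient m = {x. \<forall>p. p \<notin> grid m \<longrightarrow> x p = 0}"

definition uRM :: "nat \<Rightarrow> ((nat \<times> nat) \<Rightarrow> bit) set" where
  "uRM m = {x \<in> ambient m. \<forall>C \<in> checks m. (\<Sum>p\<in>C. x p) = 0}"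

end

(*
  Order the positions lexicographically and call the largest position of a check its leader.
  Distinct checks have distinct leaders. A bulk check leads at its lower right corner, off the
  first row and column; a horizontal (vertical) check leads in the first row (column), and on
  its line S(w,t) leads at L/2 + w(2t+1)/2 + 1, so w and t are recovered as the 2-part and the
  odd part of w(2t+1). Hence the incidence matrix of checks against leaders is unitriangular,
  which makes the checks independent. It also lets one solve the parity equations leader by
  leader: a codeword can be prescribed arbitrarily on the 2^m - (2^m - m - 1) = m + 1 positions
  that lead no check, and is then unique.
*)

theory Submission
  imports Defs "HOL-Library.Product_Lexorder"
begin

section \<open>Triangular families of checks\<close>

lemma sum_fun_apply: "(\<Sum>v\<in>T. g v) p = (\<Sum>v\<in>T. g v p)"
  by (induction T rule: infinite_finite_induct) auto

lemma f2scale_sum_apply: "(\<Sum>v\<in>T. f2scale (u v) (g v)) p = (\<Sum>v\<in>T. u v * g v p)"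
  by (simp add: sum_fun_apply f2scale_def)

interpretation f2: vector_space f2scale
  unfolding vector_space_def module_def f2scale_def
  by (auto simp: fun_eq_iff algebra_simps)

lemma triangular_combination_eq_zero:
  fixes v :: "'i \<Rightarrow> 'a::linorder \<Rightarrow> bit" and lead :: "'i \<Rightarrow> 'a"
  assumes "finite I"
    and diag: "\<And>i. i \<in> I \<Longrightarrow> v i (lead i) = 1"
    and upper: "\<And>i j. i \<in> I \<Longrightarrow> j \<in> I \<Longrightarrow> j \<noteq> i \<Longrightarrow> v j (lead i) \<noteq> 0 \<Longrightarrow> lead i < lead j"
    and zero: "\<And>p. (\<Sum>i\<in>I. c i * v i p) = 0"
    and "k \<in> I"
  shows "c k = 0"
proof (rule ccontr)
  assume "c k \<noteq> 0"
  define J where "J = {i \<in> I. c i \<noteq> 0}"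
  have J: "finite J" "J \<noteq> {}" using \<open>finite I\<close> \<open>k \<in> I\<close> \<open>c k \<noteq> 0\<close> by (auto simp: J_def)
  have "Max (lead ` J) \<in> lead ` J" using J by simp
  then obtain i0 where i0: "i0 \<in> J" "lead i0 = Max (lead ` J)" by auto
  then have "i0 \<in> I" by (simp add: J_def)
  have "c i * v i (lead i0) = 0" if "i \<in> I" "i \<noteq> i0" for i
  proof (cases "i \<in> J")
    case True
    then have "lead i \<le> lead i0" using i0 J by simp
    then have "v i (lead i0) = 0" using upper[of i0 i] \<open>i0 \<in> I\<close> that by force
    then show ?thesis by simp
  qed (use that in \<open>simp add: J_def\<close>)
  then have "(\<Sum>i\<in>I - {i0}. c i * v i (lead i0)) = 0"
    by (intro sum.neutral) blast
  then have "(\<Sum>i\<in>I. c i * v i (lead i0)) = c i0 * v i0 (lead i0)"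
    using sum.remove[OF \<open>finite I\<close> \<open>i0 \<in> I\<close>] by (metis add_0_right)
  also have "\<dots> = 1" using diag[OF \<open>i0 \<in> I\<close>] i0(1) by (simp add: J_def)
  finally show False using zero by simp
qed

lemma f2_independent_if_triangular:
  fixes v :: "'i \<Rightarrow> (nat \<times> nat) \<Rightarrow> bit" and lead :: "'i \<Rightarrow> nat \<times> nat"
  assumes "finite I"
    and diag: "\<And>i. i \<in> I \<Longrightarrow> v i (lead i) = 1"
    and upper: "\<And>i j. i \<in> I \<Longrightarrow> j \<in> I \<Longrightarrow> j \<noteq> i \<Longrightarrow> v j (lead i) \<noteq> 0 \<Longrightarrow> lead i < lead j"
  shows "inj_on v I" and "f2.independent (v ` I)"
proof -
  show inj: "inj_on v I"
  proof (rule inj_onI, rule ccontr)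
    fix i j assume ij: "i \<in> I" "j \<in> I" "v i = v j" "i \<noteq> j"
    then have "v j (lead i) \<noteq> 0" "v i (lead j) \<noteq> 0"
      using diag[OF ij(1)] diag[OF ij(2)] by simp_all
    then have "lead i < lead j" "lead j < lead i" using upper ij by auto
    then show False by simp
  qed
  show "f2.independent (v ` I)"
  proof (rule f2.independent_if_scalars_zero)
    show "finite (v ` I)" using \<open>finite I\<close> by simp
  next
    fix f w assume sum0: "(\<Sum>w\<in>v ` I. f2scale (f w) w) = 0" and "w \<in> v ` I"
    then obtain k where "k \<in> I" "w = v k" by blast
    have "(\<Sum>i\<in>I. (f \<circ> v) i * v i p) = 0" for p
      using fun_cong[OF sum0, of p] by (simp add: sum.reindex[OF inj] f2scale_sum_apply)
    from triangular_combination_eq_zero[of I v lead "f \<circ> v", OF \<open>finite I\<close> diag upper this \<open>k \<in> I\<close>]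
    show "f w = 0" using \<open>w = v k\<close> by simp
  qed
qed

definition triangular :: "'a::linorder set set \<Rightarrow> bool" where
  "triangular CC \<longleftrightarrow> finite CC \<and> (\<forall>C\<in>CC. finite C \<and> C \<noteq> {}) \<and> inj_on Max CC"

definition parity_kernel :: "'a set \<Rightarrow> 'a set set \<Rightarrow> ('a \<Rightarrow> bit) set" where
  "parity_kernel G CC = {x. (\<forall>p. p \<notin> G \<longrightarrow> x p = 0) \<and> (\<forall>C\<in>CC. (\<Sum>p\<in>C. x p) = 0)}"

lemma triangular_Max_less:
  assumes "triangular CC" "C \<in> CC" "D \<in> CC" "C \<noteq> D" "Max C \<in> D"
  shows "Max C < Max D"
proof -
  have "Max C \<le> Max D" using assms unfolding triangular_def by auto
  moreover have "Max C \<noteq> Max D" using assms unfolding triangular_def inj_on_def by metis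
  ultimately show ?thesis by simp
qed

lemma triangular_Un:
  assumes "triangular CC" "triangular DD" "Max ` CC \<inter> Max ` DD = {}"
  shows "triangular (CC \<union> DD)"
  using assms unfolding triangular_def by (auto simp: inj_on_Un)

lemma triangular_image:
  assumes "triangular CC" "strict_mono f"
  shows "triangular ((`) f ` CC)" and "Max ` (`) f ` CC = f ` Max ` CC"
    and "card ((`) f ` CC) = card CC"
proof -
  have Max_image: "Max (f ` C) = f (Max C)" if "C \<in> CC" for C
    using assms that unfolding triangular_def
    by (intro mono_Max_commute[symmetric]) (auto intro: strict_mono_mono)
  show "Max ` (`) f ` CC = f ` Max ` CC"
    using Max_image by (force simp: image_image)
  have "inj f" using \<open>strict_mono f\<close> by (rule strict_mono_imp_inj_on)
  then show "card ((`) f ` CC) = card CC"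
    by (intro card_image inj_onI) (simp add: inj_image_eq_iff)
  have "inj_on Max ((`) f ` CC)"
  proof (rule inj_onI, clarify)
    fix C D assume "C \<in> CC" "D \<in> CC" "Max (f ` C) = Max (f ` D)"
    then have "Max C = Max D" using Max_image \<open>inj f\<close> by (simp add: inj_eq)
    then show "f ` C = f ` D"
      using assms(1) \<open>C \<in> CC\<close> \<open>D \<in> CC\<close> unfolding triangular_def by (metis inj_onD)
  qed
  then show "triangular ((`) f ` CC)" using assms(1) unfolding triangular_def by auto
qed

lemma triangular_indicators_independent:
  fixes CC :: "(nat \<times> nat) set set"
  assumes "triangular CC"
  shows "f2.independent ((\<lambda>C. indicator C :: (nat \<times> nat) \<Rightarrow> bit) ` CC)"
proof (rule f2_independent_if_triangular(2)[where lead = Max])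
  show "finite CC" using assms unfolding triangular_def by simp
  show "indicator C (Max C) = (1::bit)" if "C \<in> CC" for C
    using assms that unfolding triangular_def by simp
  show "Max C < Max D" if "C \<in> CC" "D \<in> CC" "D \<noteq> C" "(indicator D (Max C) :: bit) \<noteq> 0" for C D
    using triangular_Max_less[OF assms] that by (simp add: indicator_def split: if_splits)
qed

text \<open>Solve the checks one at a time in increasing order of leaders, each time correcting the
value at the new leader, which lies in none of the earlier checks.\<close>

lemma triangular_extension:
  fixes f :: "'a::linorder \<Rightarrow> bit"
  assumes tri: "triangular CC"
  shows "\<exists>x. (\<forall>p. p \<notin> Max ` CC \<longrightarrow> x p = f p) \<and> (\<forall>C\<in>CC. (\<Sum>p\<in>C. x p) = 0)"
proof -
  have "\<exists>x. (\<forall>p. p \<notin> Max ` DD \<longrightarrow> x p = f p) \<and> (\<forall>C\<in>DD. (\<Sum>p\<in>C. x p) = 0)"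
    if "finite DD" "DD \<subseteq> CC" for DD
    using that
  proof (induction DD rule: finite_ranking_induct[where f = Max])
    case empty
    show ?case by auto
  next
    case (insert C0 S)
    note sub = \<open>insert C0 S \<subseteq> CC\<close>
    then obtain x where x: "\<And>p. p \<notin> Max ` S \<Longrightarrow> x p = f p"
      "\<And>C. C \<in> S \<Longrightarrow> (\<Sum>p\<in>C. x p) = 0"
      using insert.IH by auto
    have C0: "finite C0" "Max C0 \<in> C0" using sub tri unfolding triangular_def by auto
    have fresh: "Max C0 \<notin> C" if "C \<in> S" "C \<noteq> C0" for C
      using triangular_Max_less[OF tri, of C0 C] insert.hyps(2)[of C] sub that by force
    define x' where "x' = x(Max C0 := x (Max C0) + (\<Sum>p\<in>C0. x p))"
    have split: "(\<Sum>p\<in>C0. y p) = y (Max C0) + (\<Sum>p\<in>C0 - {Max C0}. y p)" for y :: "'a \<Rightarrow> bit"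
      using C0 by (rule sum.remove)
    have "(\<Sum>p\<in>C0 - {Max C0}. x' p) = (\<Sum>p\<in>C0 - {Max C0}. x p)"
      by (intro sum.cong) (auto simp: x'_def)
    then have "(\<Sum>p\<in>C0. x' p) = x' (Max C0) + (\<Sum>p\<in>C0 - {Max C0}. x p)"
      by (simp only: split[of x'])
    also have "x' (Max C0) = x (Max C0) + (\<Sum>p\<in>C0. x p)"
      unfolding x'_def by (rule fun_upd_same)
    also have "x (Max C0) + (\<Sum>p\<in>C0. x p) + (\<Sum>p\<in>C0 - {Max C0}. x p)
        = (\<Sum>p\<in>C0. x p) + (\<Sum>p\<in>C0. x p)"
      by (simp only: split[of x] add_ac)
    finally have "(\<Sum>p\<in>C0. x' p) = 0" by simp
    moreover have "(\<Sum>p\<in>C. x' p) = 0" if "C \<in> S" "C \<noteq> C0" for C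
      using x(2)[OF that(1)] fresh[OF that] by (metis (mono_tags) sum.cong fun_upd_other x'_def)
    moreover have "x' p = f p" if "p \<notin> Max ` insert C0 S" for p
      using x(1) that by (simp add: x'_def)
    ultimately show "\<exists>x. (\<forall>p. p \<notin> Max ` insert C0 S \<longrightarrow> x p = f p) \<and>
        (\<forall>C\<in>insert C0 S. (\<Sum>p\<in>C. x p) = 0)"
      by (intro exI[of _ x']) blast
  qed
  then show ?thesis using tri unfolding triangular_def by blast
qed

lemma triangular_unique:
  fixes x :: "'a::linorder \<Rightarrow> bit"
  assumes tri: "triangular CC"
    and off: "\<And>p. p \<notin> Max ` CC \<Longrightarrow> x p = 0"
    and sums: "\<And>C. C \<in> CC \<Longrightarrow> (\<Sum>p\<in>C. x p) = 0"
  shows "x = 0"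
proof (rule ccontr)
  assume "x \<noteq> 0"
  define Z where "Z = {C \<in> CC. x (Max C) \<noteq> 0}"
  have Z: "finite Z" "Z \<noteq> {}"
  proof -
    show "finite Z" using tri by (simp add: Z_def triangular_def)
    obtain q where "x q \<noteq> 0" using \<open>x \<noteq> 0\<close> by (metis ext zero_fun_def)
    then obtain C where "C \<in> CC" "q = Max C" using off by blast
    then show "Z \<noteq> {}" using \<open>x q \<noteq> 0\<close> by (auto simp: Z_def)
  qed
  have "Min (Max ` Z) \<in> Max ` Z" using Z by simp
  then obtain C0 where C0: "C0 \<in> Z" "Max C0 = Min (Max ` Z)" by auto
  have C0_fin: "finite C0" "Max C0 \<in> C0" using C0(1) tri by (auto simp: Z_def triangular_def)
  have "x p = 0" if "p \<in> C0 - {Max C0}" for p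
  proof (rule ccontr)
    assume "x p \<noteq> 0"
    then obtain D where "D \<in> Z" "p = Max D" using off by (force simp: Z_def)
    then have "Max C0 \<le> p" using C0 Z by simp
    moreover have "p < Max C0" using that C0_fin by (simp add: order.not_eq_order_implies_strict)
    ultimately show False by simp
  qed
  then have "(\<Sum>p\<in>C0 - {Max C0}. x p) = 0" by (rule sum.neutral[rule_format])
  then have "(\<Sum>p\<in>C0. x p) = x (Max C0)"
    using sum.remove[OF C0_fin] by (metis add_0_right)
  also have "\<dots> = 1" using C0 by (simp add: Z_def)
  finally show False using sums C0 by (simp add: Z_def)
qed

lemma parity_kernel_expansion:
  fixes G :: "(nat \<times> nat) set"
  assumes tri: "triangular CC" and "finite G"
    and b_kernel: "\<And>q. q \<in> G - Max ` CC \<Longrightarrow> b q \<in> parity_kernel G CC"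
    and b_free: "\<And>q p. q \<in> G - Max ` CC \<Longrightarrow> p \<in> G - Max ` CC \<Longrightarrow> b q p = indicator {q} p"
    and x: "x \<in> parity_kernel G CC"
  shows "x = (\<Sum>q\<in>G - Max ` CC. f2scale (x q) (b q))" (is "x = ?y")
proof -
  let ?F = "G - Max ` CC"
  have y_apply: "?y p = (\<Sum>q\<in>?F. x q * b q p)" for p
    by (rule f2scale_sum_apply)
  have "x - ?y = 0"
  proof (rule triangular_unique[OF tri])
    fix p assume p: "p \<notin> Max ` CC"
    show "(x - ?y) p = 0"
    proof (cases "p \<in> G")
      case True
      then have "?y p = (\<Sum>q\<in>?F. x q * indicator {q} p)"
        unfolding y_apply using p b_free by (intro sum.cong) auto
      also have "\<dots> = (\<Sum>q\<in>?F. if q = p then x p else 0)"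
        by (intro sum.cong) (auto simp: indicator_def)
      also have "\<dots> = x p" using True p \<open>finite G\<close> by (subst sum.delta) auto
      finally show ?thesis by simp
    next
      case False
      then have "x p = 0" "\<And>q. q \<in> ?F \<Longrightarrow> b q p = 0"
        using x b_kernel unfolding parity_kernel_def by blast+
      then show ?thesis by (simp add: y_apply)
    qed
  next
    fix C assume C: "C \<in> CC"
    have "(\<Sum>p\<in>C. ?y p) = (\<Sum>q\<in>?F. x q * (\<Sum>p\<in>C. b q p))"
      unfolding y_apply by (subst sum.swap) (simp only: sum_distrib_left)
    also have "\<dots> = 0" using b_kernel C by (simp add: parity_kernel_def)
    moreover have "(\<Sum>p\<in>C. x p) = 0" using x C unfolding parity_kernel_def by blast
    ultimately show "(\<Sum>p\<in>C. (x - ?y) p) = 0"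
      unfolding fun_diff_def by (simp only: sum_subtractf diff_self)
  qed
  then show ?thesis by simp
qed

lemma triangular_leaders_subset:
  assumes "triangular CC" "\<Union>CC \<subseteq> G"
  shows "Max ` CC \<subseteq> G"
  using assms unfolding triangular_def by (auto intro: Max_in)

lemma parity_kernel_unit_vectors:
  fixes G :: "'a::linorder set"
  assumes tri: "triangular CC" and "\<Union>CC \<subseteq> G"
  obtains b :: "'a \<Rightarrow> 'a \<Rightarrow> bit"
  where "\<And>q. q \<in> G - Max ` CC \<Longrightarrow> b q \<in> parity_kernel G CC"
    and "\<And>q p. p \<in> G - Max ` CC \<Longrightarrow> b q p = indicator {q} p"
proof -
  have "\<forall>q. \<exists>x. (\<forall>p. p \<notin> Max ` CC \<longrightarrow> x p = (indicator {q} p :: bit)) \<and>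
      (\<forall>C\<in>CC. (\<Sum>p\<in>C. x p) = 0)"
    by (rule allI, rule triangular_extension[OF tri])
  from choice[OF this] obtain b :: "'a \<Rightarrow> 'a \<Rightarrow> bit"
    where b_off: "\<And>q p. p \<notin> Max ` CC \<Longrightarrow> b q p = indicator {q} p"
      and b_sums: "\<And>q C. C \<in> CC \<Longrightarrow> (\<Sum>p\<in>C. b q p) = 0"
    by blast
  have "b q \<in> parity_kernel G CC" if "q \<in> G - Max ` CC" for q
  proof -
    have "b q p = 0" if "p \<notin> G" for p
    proof -
      have "p \<notin> Max ` CC" "p \<noteq> q"
        using triangular_leaders_subset[OF assms] \<open>q \<in> G - Max ` CC\<close> that by auto
      then show ?thesis by (simp add: b_off)
    qed
    then show ?thesis using b_sums unfolding parity_kernel_def by blast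
  qed
  moreover have "b q p = indicator {q} p" if "p \<in> G - Max ` CC" for q p
    using that b_off by simp
  ultimately show ?thesis using that by blast
qed

lemma dim_parity_kernel:
  fixes G :: "(nat \<times> nat) set"
  assumes tri: "triangular CC" and "finite G" and "\<Union>CC \<subseteq> G"
  shows "f2.dim (parity_kernel G CC) = card G - card CC"
proof -
  define F where "F = G - Max ` CC"
  obtain b where b_kernel: "\<And>q. q \<in> F \<Longrightarrow> b q \<in> parity_kernel G CC"
    and b_free: "\<And>q p. p \<in> F \<Longrightarrow> b q p = indicator {q} p"
    using parity_kernel_unit_vectors[OF assms(1,3)] unfolding F_def by metis
  have "finite F" using \<open>finite G\<close> by (simp add: F_def)
  moreover have "b q (id q) = 1" if "q \<in> F" for q
    using b_free[OF that] by simp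
  moreover have "b q (id p) = 0" if "p \<in> F" "q \<noteq> p" for p q
    using b_free[OF that(1)] that(2) by simp
  ultimately have indep: "inj_on b F" "f2.independent (b ` F)"
    using f2_independent_if_triangular[of F b id] by blast+
  have "parity_kernel G CC \<subseteq> f2.span (b ` F)"
  proof
    fix x assume "x \<in> parity_kernel G CC"
    then have "x = (\<Sum>q\<in>F. f2scale (x q) (b q))"
      using b_kernel b_free unfolding F_def
      by (intro parity_kernel_expansion[OF tri \<open>finite G\<close>]) auto
    also have "\<dots> \<in> f2.span (b ` F)"
      by (intro f2.span_sum f2.span_scale f2.span_base) auto
    finally show "x \<in> f2.span (b ` F)" .
  qed
  moreover have "card (b ` F) = card G - card CC"
  proof -
    have "card (Max ` CC) = card CC"
      using tri unfolding triangular_def by (simp add: card_image)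
    then show ?thesis
      using indep(1) triangular_leaders_subset[OF assms(1,3)] \<open>finite G\<close>
      by (simp add: card_image F_def card_Diff_subset finite_subset)
  qed
  ultimately show ?thesis
    using b_kernel indep(2) by (intro f2.dim_unique[of "b ` F"]) auto
qed

section \<open>Boundary checks on a line\<close>

lemma pow2_mult_odd_inject:
  fixes t t' :: int
  assumes "(2::int) ^ a * (2 * t + 1) = 2 ^ b * (2 * t' + 1)"
  shows "a = b" and "t = t'"
proof -
  have *: "a = b \<and> t = t'"
    if "a \<le> b" and eq: "(2::int) ^ a * (2 * t + 1) = 2 ^ b * (2 * t' + 1)" for a b and t t' :: int
  proof -
    obtain k where b: "b = a + k" using le_Suc_ex[OF \<open>a \<le> b\<close>] by blast
    then have odd_eq: "2 * t + 1 = 2 ^ k * (2 * t' + 1)" using eq by (simp add: power_add)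
    show ?thesis
    proof (cases k)
      case 0
      then show ?thesis using odd_eq b by simp
    next
      case (Suc k')
      then have "2 * t + 1 = 2 * (2 ^ k' * (2 * t' + 1))" using odd_eq by simp
      then show ?thesis by presburger
    qed
  qed
  show "a = b" "t = t'" using *[of a b t t'] *[of b a t' t] assms by (cases "a \<le> b"; simp)+
qed

definition line_check_params :: "nat \<Rightarrow> (nat \<times> int) set" where
  "line_check_params n =
    (SIGMA s:{1..n-1}. {- ((2::int) ^ n div (2 * 2 ^ s)) + 1 .. (2::int) ^ n div (2 * 2 ^ s) - 1})"

lemma line_checks_eq_image: "line_checks n = (\<lambda>(s, t). bchk n s t) ` line_check_params n"
  unfolding line_checks_def line_check_params_def by fastforce

lemma bchk_eq_image:
  assumes "(s, t) \<in> line_check_params n"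
  defines "c \<equiv> (2::int) ^ (n - 1) + 2 ^ (s - 1) * (2 * t + 1) + 1"
  shows "bchk n s t = nat ` {c - 2 ^ s - 1, c - 2 ^ s, c - 1, c}"
    and "2 ^ s + 2 \<le> c" and "c \<le> 2 ^ n"
proof -
  have s: "1 \<le> s" "s \<le> n - 1"
    and t: "- ((2::int) ^ n div (2 * 2 ^ s)) + 1 \<le> t" "t \<le> (2::int) ^ n div (2 * 2 ^ s) - 1"
    using assms(1) unfolding line_check_params_def by auto
  define s0 k where "s0 = s - 1" and "k = n - s - 1"
  then have sk: "s = Suc s0" "n = s0 + k + 2" using s by auto
  define H where "H = (2::int) ^ s0"
  define K where "K = (2::int) ^ k"
  have "H \<ge> 1" "K \<ge> 1" unfolding H_def K_def by simp_all
  have pow: "(2::int) ^ n = 4 * H * K" "(2::int) ^ s = 2 * H" "(2::int) ^ (n - 1) = 2 * H * K"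
    "(2::int) ^ (s - 1) = H"
    unfolding sk H_def K_def by (simp_all add: power_add)
  then have "(2::int) ^ n div (2 * 2 ^ s) = K" using \<open>H \<ge> 1\<close> by simp
  then have "1 \<le> 2 * K + 2 * t - 1" "1 \<le> 2 * K - 2 * t - 1" using t by auto
  then have "H \<le> H * (2 * K + 2 * t - 1)" "H \<le> H * (2 * K - 2 * t - 1)"
    using \<open>H \<ge> 1\<close> mult_left_mono[of 1 _ H] by auto
  then show "2 ^ s + 2 \<le> c" "c \<le> 2 ^ n"
    using \<open>H \<ge> 1\<close> unfolding c_def pow by (simp_all add: algebra_simps)
  show "bchk n s t = nat ` {c - 2 ^ s - 1, c - 2 ^ s, c - 1, c}"
    unfolding bchk_def Let_def c_def pow by (simp add: algebra_simps)
qed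

lemma bchk_leader:
  assumes "(s, t) \<in> line_check_params n"
  shows "finite (bchk n s t)" "bchk n s t \<noteq> {}" "bchk n s t \<subseteq> {1..2 ^ n}"
    and "int (Max (bchk n s t)) = 2 ^ (n - 1) + 2 ^ (s - 1) * (2 * t + 1) + 1"
    and "2 \<le> Max (bchk n s t)"
proof -
  define c where "c = (2::int) ^ (n - 1) + 2 ^ (s - 1) * (2 * t + 1) + 1"
  have eq: "bchk n s t = nat ` {c - 2 ^ s - 1, c - 2 ^ s, c - 1, c}"
    and c: "2 ^ s + 2 \<le> c" "c \<le> 2 ^ n"
    using bchk_eq_image[OF assms] unfolding c_def by blast+
  have "(0::int) < 2 ^ s" by simp
  show "finite (bchk n s t)" "bchk n s t \<noteq> {}" unfolding eq by simp_all
  have range: "1 \<le> e \<and> e \<le> 2 ^ n" if "e \<in> {c - 2 ^ s - 1, c - 2 ^ s, c - 1, c}" for e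
    using that c \<open>0 < 2 ^ s\<close> by (safe; linarith)
  show "bchk n s t \<subseteq> {1..2 ^ n}"
  proof
    fix p assume "p \<in> bchk n s t"
    then obtain e where "e \<in> {c - 2 ^ s - 1, c - 2 ^ s, c - 1, c}" "p = nat e"
      unfolding eq by blast
    then show "p \<in> {1..2 ^ n}" using range[of e] by (simp add: le_nat_iff nat_le_iff)
  qed
  have "Max (bchk n s t) = nat c"
    unfolding eq using \<open>0 < 2 ^ s\<close>
    by (intro Max_eqI) (auto intro!: nat_mono simp del: zero_less_power)
  moreover have "2 \<le> c" using c \<open>0 < 2 ^ s\<close> by linarith
  ultimately show "int (Max (bchk n s t)) = 2 ^ (n - 1) + 2 ^ (s - 1) * (2 * t + 1) + 1"
    and "2 \<le> Max (bchk n s t)"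
    unfolding c_def[symmetric] by simp_all
qed

lemma inj_on_Max_bchk: "inj_on (\<lambda>(s, t). Max (bchk n s t)) (line_check_params n)"
proof (rule inj_onI, clarify)
  fix s t s' t'
  assume st: "(s, t) \<in> line_check_params n" "(s', t') \<in> line_check_params n"
    and "Max (bchk n s t) = Max (bchk n s' t')"
  then have "(2::int) ^ (s - 1) * (2 * t + 1) = 2 ^ (s' - 1) * (2 * t' + 1)"
    using bchk_leader(4)[OF st(1)] bchk_leader(4)[OF st(2)] by simp
  then have "s - 1 = s' - 1" "t = t'" by (rule pow2_mult_odd_inject)+
  moreover have "1 \<le> s" "1 \<le> s'" using st unfolding line_check_params_def by auto
  ultimately show "s = s' \<and> t = t'" by simp
qed

lemma sum_pow2_minus_one: "(\<Sum>k = 1..<n. (2::nat) ^ k - 1) = 2 ^ n - n - 1"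
proof (induction n)
  case (Suc n)
  have "n + 1 \<le> 2 ^ n" using less_exp[of n] by linarith
  with Suc show ?case by (cases n) (simp_all add: sum.atLeastLessThan_Suc)
qed simp

lemma card_line_check_params: "card (line_check_params n) = 2 ^ n - n - 1"
proof -
  have "card (line_check_params n) =
      (\<Sum>s = 1..n-1. card {- ((2::int) ^ n div (2 * 2 ^ s)) + 1 .. (2::int) ^ n div (2 * 2 ^ s) - 1})"
    unfolding line_check_params_def by (rule card_SigmaI) auto
  also have "\<dots> = (\<Sum>s = 1..n-1. 2 ^ (n - s) - 1)"
  proof (rule sum.cong)
    fix s assume "s \<in> {1..n-1}"
    define k where "k = n - s - 1"
    then have k: "n = s + k + 1" using \<open>s \<in> {1..n-1}\<close> by auto
    have "(2::int) ^ n div (2 * 2 ^ s) = 2 ^ k" unfolding k by (simp add: power_add)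
    moreover have "(2::nat) ^ (n - s) = 2 * 2 ^ k" unfolding k by simp
    moreover have "(2::int) * 2 ^ k - 1 = int (2 * 2 ^ k - 1)" by (simp add: of_nat_diff)
    ultimately show "card {- ((2::int) ^ n div (2 * 2 ^ s)) + 1 .. (2::int) ^ n div (2 * 2 ^ s) - 1}
        = 2 ^ (n - s) - 1"
      by (simp only: card_atLeastAtMost_int)
  qed simp
  also have "\<dots> = (\<Sum>k = 1..<n. 2 ^ k - 1)"
    by (rule sum.reindex_bij_witness[of _ "\<lambda>k. n - k" "\<lambda>k. n - k"]) auto
  also have "\<dots> = 2 ^ n - n - 1" by (rule sum_pow2_minus_one)
  finally show ?thesis .
qed

lemma line_checks:
  shows triangular_line_checks: "triangular (line_checks n)"
    and card_line_checks: "card (line_checks n) = 2 ^ n - n - 1"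
    and line_check_bounds: "S \<in> line_checks n \<Longrightarrow> S \<subseteq> {1..2 ^ n} \<and> 2 \<le> Max S"
proof -
  have inj: "inj_on (Max \<circ> (\<lambda>(s, t). bchk n s t)) (line_check_params n)"
    using inj_on_Max_bchk by (simp add: comp_def case_prod_unfold)
  have "finite (line_check_params n)" unfolding line_check_params_def by auto
  then show "triangular (line_checks n)"
    unfolding triangular_def line_checks_eq_image using bchk_leader(1,2) inj_on_imageI[OF inj]
    by auto
  show "card (line_checks n) = 2 ^ n - n - 1"
    unfolding line_checks_eq_image card_image[OF inj_on_imageI2[OF inj]] by (rule card_line_check_params)
  show "S \<in> line_checks n \<Longrightarrow> S \<subseteq> {1..2 ^ n} \<and> 2 \<le> Max S"
    unfolding line_checks_eq_image using bchk_leader(3,5) by auto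
qed

section \<open>The checks on the grid\<close>

definition bulk_check :: "nat \<Rightarrow> nat \<Rightarrow> (nat \<times> nat) set" where
  "bulk_check i j = {(i, j), (i + 1, j), (i, j + 1), (i + 1, j + 1)}"

lemma Max_bulk_check: "Max (bulk_check i j) = (i + 1, j + 1)"
  unfolding bulk_check_def by (rule Max_eqI) auto

lemma bulk_checks_eq_image:
  "bulk_checks m = (\<lambda>(i, j). bulk_check i j) ` ({1..<2 ^ rowexp m} \<times> {1..<2 ^ colexp m})"
  unfolding bulk_checks_def bulk_check_def by fastforce

lemma bulk_checks:
  shows triangular_bulk_checks: "triangular (bulk_checks m)"
    and card_bulk_checks: "card (bulk_checks m) = (2 ^ rowexp m - 1) * (2 ^ colexp m - 1)"
    and bulk_check_leaders: "Max ` bulk_checks m \<subseteq> {2..} \<times> {2..}"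
    and bulk_checks_subset_grid: "\<Union>(bulk_checks m) \<subseteq> grid m"
proof -
  have inj: "inj_on (Max \<circ> (\<lambda>(i, j). bulk_check i j)) X" for X
    by (rule inj_onI) (auto simp: Max_bulk_check)
  have "inj_on Max (bulk_checks m)"
    unfolding bulk_checks_eq_image by (rule inj_on_imageI[OF inj])
  moreover have "finite (bulk_checks m)" "\<forall>C\<in>bulk_checks m. finite C \<and> C \<noteq> {}"
    by (auto simp: bulk_checks_eq_image bulk_check_def)
  ultimately show "triangular (bulk_checks m)" unfolding triangular_def by blast
  show "card (bulk_checks m) = (2 ^ rowexp m - 1) * (2 ^ colexp m - 1)"
    unfolding bulk_checks_eq_image card_image[OF inj_on_imageI2[OF inj]]
    by (simp add: card_cartesian_product)
  show "Max ` bulk_checks m \<subseteq> {2..} \<times> {2..}"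
    unfolding bulk_checks_eq_image by (auto simp: Max_bulk_check)
  show "\<Union>(bulk_checks m) \<subseteq> grid m"
    unfolding bulk_checks_eq_image grid_def bulk_check_def by auto
qed

lemma strict_mono_top_row: "strict_mono (\<lambda>j. (1::nat, j :: nat))"
  by (rule strict_monoI) (simp add: less_prod_def)

lemma strict_mono_left_column: "strict_mono (\<lambda>i. (i :: nat, 1::nat))"
  by (rule strict_monoI) (simp add: less_prod_def)

lemma horiz_checks:
  shows triangular_horiz_checks: "triangular (horiz_checks m)"
    and card_horiz_checks: "card (horiz_checks m) = 2 ^ colexp m - colexp m - 1"
    and horiz_check_leaders: "Max ` horiz_checks m \<subseteq> {1} \<times> {2..}"
    and horiz_checks_subset_grid: "\<Union>(horiz_checks m) \<subseteq> grid m"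
proof -
  note image = triangular_image[OF triangular_line_checks strict_mono_top_row]
  show "triangular (horiz_checks m)" "card (horiz_checks m) = 2 ^ colexp m - colexp m - 1"
    unfolding horiz_checks_def using image(1,3) card_line_checks by simp_all
  show "Max ` horiz_checks m \<subseteq> {1} \<times> {2..}"
    unfolding horiz_checks_def image(2) using line_check_bounds by auto
  show "\<Union>(horiz_checks m) \<subseteq> grid m"
    unfolding horiz_checks_def grid_def using line_check_bounds by fastforce
qed

lemma vert_checks:
  shows triangular_vert_checks: "triangular (vert_checks m)"
    and card_vert_checks: "card (vert_checks m) = 2 ^ rowexp m - rowexp m - 1"
    and vert_check_leaders: "Max ` vert_checks m \<subseteq> {2..} \<times> {1}"
    and vert_checks_subset_grid: "\<Union>(vert_checks m) \<subseteq> grid m"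
proof -
  note image = triangular_image[OF triangular_line_checks strict_mono_left_column]
  show "triangular (vert_checks m)" "card (vert_checks m) = 2 ^ rowexp m - rowexp m - 1"
    unfolding vert_checks_def using image(1,3) card_line_checks by simp_all
  show "Max ` vert_checks m \<subseteq> {2..} \<times> {1}"
    unfolding vert_checks_def image(2) using line_check_bounds by auto
  show "\<Union>(vert_checks m) \<subseteq> grid m"
    unfolding vert_checks_def grid_def using line_check_bounds by fastforce
qed

lemma triangular_checks: "triangular (checks m)"
  unfolding checks_def
  using bulk_check_leaders horiz_check_leaders vert_check_leaders
  by (intro triangular_Un triangular_bulk_checks triangular_horiz_checks triangular_vert_checks)
    (fastforce simp: image_Un)+

lemma card_checks: "card (checks m) = 2 ^ m - m - 1"
proof -
  define a b where "a = colexp m" and "b = rowexp m"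
  have "a + b = m" unfolding a_def b_def colexp_def rowexp_def by simp
  have disjoint: "bulk_checks m \<inter> horiz_checks m = {}"
      "(bulk_checks m \<union> horiz_checks m) \<inter> vert_checks m = {}"
    using bulk_check_leaders horiz_check_leaders vert_check_leaders by fastforce+
  have "card (checks m) = card (bulk_checks m) + card (horiz_checks m) + card (vert_checks m)"
    using disjoint triangular_bulk_checks triangular_horiz_checks triangular_vert_checks
    unfolding checks_def by (simp add: card_Un_disjoint triangular_def)
  also have "\<dots> = (2 ^ b - 1) * (2 ^ a - 1) + (2 ^ a - a - 1) + (2 ^ b - b - 1)"
    unfolding a_def b_def card_bulk_checks card_horiz_checks card_vert_checks ..
  also have "\<dots> = 2 ^ m - m - 1"
  proof -
    define x y :: nat where "x = 2 ^ a - 1" and "y = 2 ^ b - 1"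
    then have x: "2 ^ a = x + 1" and y: "2 ^ b = y + 1" by simp_all
    have "a \<le> x" "b \<le> y" using less_exp[of a] less_exp[of b] x y by simp_all
    moreover have "(2::nat) ^ m = (x + 1) * (y + 1)" using \<open>a + b = m\<close> x y by (metis power_add)
    ultimately show ?thesis unfolding x y \<open>a + b = m\<close>[symmetric] by (simp add: algebra_simps)
  qed
  finally show ?thesis .
qed

lemma card_grid: "card (grid m) = 2 ^ m"
proof -
  have "rowexp m + colexp m = m" unfolding rowexp_def colexp_def by simp
  then show ?thesis unfolding grid_def by (simp add: card_cartesian_product flip: power_add)
qed

lemma uRM_eq_parity_kernel: "uRM m = parity_kernel (grid m) (checks m)"
  unfolding uRM_def ambient_def parity_kernel_def by blast

theorem lemma1:
  fixes m :: nat
  assumes "m \<ge> 2"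
  shows "\<not> module.dependent f2scale ((\<lambda>C. indicator C :: (nat \<times> nat) \<Rightarrow> bit) ` checks m)
     \<and> card (checks m) = 2 ^ m - m - 1
     \<and> card (grid m) = 2 ^ m
     \<and> vector_space.dim f2scale (uRM m) = m + 1"
proof -
  have "checks m \<subseteq> Pow (grid m)"
    using bulk_checks_subset_grid horiz_checks_subset_grid vert_checks_subset_grid
    unfolding checks_def by blast
  then have "vector_space.dim f2scale (uRM m) = card (grid m) - card (checks m)"
    unfolding uRM_eq_parity_kernel
    by (intro dim_parity_kernel triangular_checks) (auto simp: grid_def)
  moreover have "m + 1 \<le> 2 ^ m" using less_exp[of m] by linarith
  ultimately show ?thesis
    using triangular_indicators_independent[OF triangular_checks] card_checks card_grid by simp
qed

end
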